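(* Let $n\ge2$ and $\sigma\ge2$ be integers, and let $s$ be a random string of length $n$ whose characters are drawn independently and uniformly from an alphabet of size $\sigma$. Set $p=(\sigma-1)/\sigma$, let $r(s)$ be the number of maximal runs of $s$, and let $k$ be the number of tokens of $\mathcal{F}(s)$. Then $r(s)-1\sim\mathrm{Bin}(n-1,p)$ and \[\mathbb{E}[k]=1+\frac{1+(n-1)p}{2}+\frac{1+\bigl((2-\sigma)/\sigma\bigr)^{n-1}}{4}=\frac{n(\sigma-1)}{2\sigma}+O(1).\]
   Context: A maximal run of a string is a maximal block of consecutive equal symbols. Let $\texttt{@},\texttt{\$}$ be two distinct symbols not in the alphabet. For a string $s$ of length $n$ let $\hat s=\texttt{@}\,s\,\texttt{\$}$ (positions $1,\dots,n+2$); $\hat s[i..j)$ is the substring at positions $i,\dots,j-1$. The leading (trailing) run of a non-empty string is its longest prefix (suffix) consisting of one repeated symbol. The Flashback decomposition $\mathcal{F}(s)$ is the sequence of tokens (pairs $(\sigma,p)$) produced as follows, starting from active span $[lo,hi)=[1,n+3)$: if $lo\ge hi$, stop. Let $\ell$ be the length of the leading run of $\hat s[lo..hi)$. If $\ell=hi-lo$, append $(\hat s[lo..hi),0)$ and stop. Otherwise let $\hat s[r..hi)$ be the trailing run of $\hat s[lo..hi)$ and $\sigma=\hat s[lo..lo+\ell)\cdot\hat s[r..hi)$; if $lo+\ell\ge r$, append $(\sigma,0)$ and stop; otherwise append $(\sigma,\ell)$ and repeat with active span $[lo+\ell,r)$. *)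

theory Defs
  imports "HOL-Probability.Probability"
begin

(* Alphabet of size alpha: the characters 0..alpha-1 (type nat).
   Extended alphabet for \<hat>s: the sentinels @ and $ plus ordinary characters. *)
datatype sym = At | Dollar | Ch nat

definition hat :: "nat list \<Rightarrow> sym list" where
  "hat s = [At] @ map Ch s @ [Dollar]"

definition lead_run :: "'a list \<Rightarrow> nat" where
  "lead_run t = length (takeWhile (\<lambda>x. x = hd t) t)"

definition trail_run :: "'a list \<Rightarrow> nat" where
  "trail_run t = length (takeWhile (\<lambda>x. x = last t) (rev t))"

lemma lead_run_pos: "t \<noteq> [] \<Longrightarrow> 0 < lead_run t"
  by (cases t) (auto simp: lead_run_def)

(* Flashback decomposition applied to the active substring t = \<hat>s[lo..hi).
   With l the leading-run length and m the trailing-run length (so r = hi - m),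
   the next active span [lo+l, r) is  take (length t - m - l) (drop l t). *)
function flashback_aux :: "sym list \<Rightarrow> (sym list \<times> nat) list" where
  "flashback_aux t =
    (if t = [] then []
     else let l = lead_run t in
       if l = length t then [(t, 0)]
       else let m = trail_run t;
                sg = take l t @ drop (length t - m) t in
         if l \<ge> length t - m then [(sg, 0)]
         else (sg, l) # flashback_aux (take (length t - m - l) (drop l t)))"
  by pat_completeness auto
termination
  by (relation "Wellfounded.measure length") (auto simp: lead_run_pos)

(* \<F>(s): starting from the full span [1, n+3) of \<hat>s *)
definition flashback :: "nat list \<Rightarrow> (sym list \<times> nat) list" where
  "flashback s = flashback_aux (hat s)"

definition runs :: "'a list \<Rightarrow> nat" where
  "runs s = length (remdups_adj s)"

definition strings :: "nat \<Rightarrow> nat \<Rightarrow> nat list set" where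
  "strings n alpha = {xs. length xs = n \<and> set xs \<subseteq> {..<alpha}}"

(* uniformly random string: i.i.d. uniform characters *)
definition rand_string :: "nat \<Rightarrow> nat \<Rightarrow> nat list pmf" where
  "rand_string n alpha = pmf_of_set (strings n alpha)"

definition exp_tokens :: "nat \<Rightarrow> nat \<Rightarrow> real" where
  "exp_tokens n alpha =
     measure_pmf.expectation (rand_string n alpha) (\<lambda>s. real (length (flashback s)))"

end

theory Submission
  imports Defs
begin

text \<open>Every step of the Flashback decomposition removes the leading and the trailing maximal run
  of the active span. On \<open>@ s $\<close> the first step removes the two sentinels, and from then on
  every token consumes two runs of \<open>s\<close>, except possibly the last one; hence
  \<open>k = 1 + \<lceil>r/2\<rceil> = 2 + \<lfloor>X/2\<rfloor>\<close> with \<open>X = r - 1\<close>. Appending a uniform character to a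
  string starts a new run with probability \<open>p\<close>, independently of the string, so
  \<open>X \<sim> Bin(n - 1, p)\<close>. Finally \<open>\<lfloor>X/2\<rfloor> = X/2 - (1 - (-1)\<^sup>X)/4\<close>, and the binomial theorem gives
  \<open>E X = (n - 1) p\<close> and \<open>E (-1)\<^sup>X = (1 - 2p)\<^sup>n\<^sup>-\<^sup>1\<close>.\<close>

lemma runs_replicate_append:
  assumes "0 < a" "u = [] \<or> hd u \<noteq> x"
  shows "runs (replicate a x @ u) = Suc (runs u)"
proof -
  have "remdups_adj (replicate a x @ u) = remdups_adj (replicate a x) @ remdups_adj u"
    using assms by (intro remdups_adj_append') auto
  then show ?thesis
    using assms by (simp add: runs_def remdups_adj_replicate)
qed

lemma runs_append_replicate:
  assumes "0 < b" "w = [] \<or> last w \<noteq> y"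
  shows "runs (w @ replicate b y) = Suc (runs w)"
proof -
  have "remdups_adj (w @ replicate b y) = remdups_adj w @ remdups_adj (replicate b y)"
    using assms by (intro remdups_adj_append') auto
  then show ?thesis
    using assms by (simp add: runs_def remdups_adj_replicate)
qed

lemma runs_snoc: "s \<noteq> [] \<Longrightarrow> runs (s @ [c]) = runs s + (if c = last s then 0 else 1)"
  by (simp add: runs_def remdups_adj_append'')

lemma runs_pos: "s \<noteq> [] \<Longrightarrow> 0 < runs s"
  by (simp add: runs_def)

lemma leading_run_decomp:
  assumes "t \<noteq> []"
  obtains a x u where "t = replicate a x @ u" "0 < a" "u = [] \<or> hd u \<noteq> x"
proof
  let ?P = "\<lambda>y. y = hd t"
  show "t = replicate (length (takeWhile ?P t)) (hd t) @ dropWhile ?P t"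
    by (metis (mono_tags) replicate_length_same set_takeWhileD takeWhile_dropWhile_id)
  show "0 < length (takeWhile ?P t)"
    using assms by (cases t) auto
  show "dropWhile ?P t = [] \<or> hd (dropWhile ?P t) \<noteq> hd t"
    using hd_dropWhile by blast
qed

lemma trailing_run_decomp:
  assumes "t \<noteq> []"
  obtains b y w where "t = w @ replicate b y" "0 < b" "w = [] \<or> last w \<noteq> y"
proof -
  obtain b y u where u: "rev t = replicate b y @ u" "0 < b" "u = [] \<or> hd u \<noteq> y"
    using leading_run_decomp[of "rev t"] assms by auto
  then have "t = rev u @ replicate b y"
    by (metis rev_append rev_replicate rev_rev_ident)
  moreover have "rev u = [] \<or> last (rev u) \<noteq> y"
    using u by (auto simp: last_rev)
  ultimately show ?thesis
    using that u by blast
qed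

lemma lead_run_replicate_append:
  assumes "0 < a" "u = [] \<or> hd u \<noteq> x"
  shows "lead_run (replicate a x @ u) = a"
  using assms unfolding lead_run_def by (cases u) (auto simp: takeWhile_append)

lemma trail_run_append_replicate:
  assumes "0 < b" "w = [] \<or> last w \<noteq> y"
  shows "trail_run (w @ replicate b y) = b"
  using assms unfolding trail_run_def
  by (cases "rev w") (auto simp: takeWhile_append last_rev[symmetric] hd_rev)

lemma flashback_aux_replicate:
  "0 < a \<Longrightarrow> flashback_aux (replicate a x) = [(replicate a x, 0)]"
  using lead_run_replicate_append[of a "[]" x] by (subst flashback_aux.simps) simp

lemma flashback_aux_two_runs:
  assumes "0 < a" "0 < b" "x \<noteq> y"
  shows "flashback_aux (replicate a x @ replicate b y) = [(replicate a x @ replicate b y, 0)]"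
proof -
  have "lead_run (replicate a x @ replicate b y) = a"
    using assms by (intro lead_run_replicate_append) auto
  moreover have "trail_run (replicate a x @ replicate b y) = b"
    using assms by (intro trail_run_append_replicate) auto
  ultimately show ?thesis
    using assms by (subst flashback_aux.simps) (simp add: Let_def)
qed

lemma flashback_aux_step:
  assumes "0 < a" "0 < b" "w \<noteq> []" "hd w \<noteq> x" "last w \<noteq> y"
  shows "flashback_aux (replicate a x @ w @ replicate b y)
           = (replicate a x @ replicate b y, a) # flashback_aux w"
proof -
  have "lead_run (replicate a x @ w @ replicate b y) = a"
    using assms by (intro lead_run_replicate_append) (cases w, auto)
  moreover have "trail_run ((replicate a x @ w) @ replicate b y) = b"
    using assms by (intro trail_run_append_replicate) auto
  ultimately show ?thesis
    using assms by (subst flashback_aux.simps) (simp add: Let_def)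
qed

lemma length_flashback_aux: "length (flashback_aux t) = (runs t + 1) div 2"
proof (induction "length t" arbitrary: t rule: less_induct)
  case less
  show ?case
  proof (cases "t = []")
    case False
    then obtain a x u where t: "t = replicate a x @ u" "0 < a" "u = [] \<or> hd u \<noteq> x"
      by (rule leading_run_decomp)
    show ?thesis
    proof (cases "u = []")
      case True
      then show ?thesis
        using t flashback_aux_replicate runs_replicate_append[of a "[]" x]
        by (simp add: runs_def)
    next
      case False
      then obtain b y w where u: "u = w @ replicate b y" "0 < b" "w = [] \<or> last w \<noteq> y"
        by (rule trailing_run_decomp)
      have "hd u \<noteq> x"
        using t False by simp
      show ?thesis
      proof (cases "w = []")
        case True
        then show ?thesis
          using t u \<open>hd u \<noteq> x\<close> flashback_aux_two_runs runs_replicate_append[of a u x]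
            runs_append_replicate[of b "[]" y]
          by (simp add: runs_def)
      next
        case False
        have "runs t = Suc (Suc (runs w))"
          using t u runs_replicate_append[of a u x] runs_append_replicate[of b w y] by simp
        moreover have "length (flashback_aux w) = (runs w + 1) div 2"
          using less t u by simp
        ultimately show ?thesis
          using t u False \<open>hd u \<noteq> x\<close> flashback_aux_step[of a b w x y] by simp
      qed
    qed
  qed (simp add: runs_def)
qed

lemma length_flashback:
  assumes "s \<noteq> []"
  shows "length (flashback s) = 1 + (runs s + 1) div 2"
proof -
  have "hat s = replicate 1 At @ map Ch s @ replicate 1 Dollar"
    by (simp add: hat_def)
  then have "flashback s = ([At, Dollar], 1) # flashback_aux (map Ch s)"
    unfolding flashback_def using assms flashback_aux_step[of 1 1 "map Ch s" At Dollar]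
    by (simp add: hd_map last_map del: flashback_aux.simps)
  moreover have "runs (map Ch s) = runs s"
    by (simp add: runs_def remdups_adj_map_injective inj_def)
  ultimately show ?thesis
    by (simp add: length_flashback_aux del: flashback_aux.simps)
qed

lemma finite_strings: "finite (strings n a)"
  using finite_lists_length_eq[of "{..<a}" n] by (simp add: strings_def conj_commute)

lemma strings_nonempty: "0 < a \<Longrightarrow> strings n a \<noteq> {}"
  by (auto simp: strings_def intro!: exI[of _ "replicate n 0"])

lemma strings_Suc: "strings (Suc n) a = (\<lambda>(s, c). s @ [c]) ` (strings n a \<times> {..<a})"
proof (intro set_eqI iffI)
  fix xs
  assume "xs \<in> strings (Suc n) a"
  then obtain ys c where "xs = ys @ [c]" "ys \<in> strings n a" "c < a"
    by (cases xs rule: rev_cases) (auto simp: strings_def)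
  then show "xs \<in> (\<lambda>(s, c). s @ [c]) ` (strings n a \<times> {..<a})"
    by force
qed (auto simp: strings_def)

lemma set_pmf_rand_string: "0 < a \<Longrightarrow> set_pmf (rand_string n a) = strings n a"
  unfolding rand_string_def using finite_strings strings_nonempty by simp

lemma pmf_of_set_Times:
  assumes "finite A" "A \<noteq> {}" "finite B" "B \<noteq> {}"
  shows "pmf_of_set (A \<times> B) = pair_pmf (pmf_of_set A) (pmf_of_set B)"
proof (rule pmf_eqI)
  fix z :: "'a \<times> 'b"
  show "pmf (pmf_of_set (A \<times> B)) z = pmf (pair_pmf (pmf_of_set A) (pmf_of_set B)) z"
    using assms by (cases z) (simp add: pmf_pair card_cartesian_product indicator_def)
qed

lemma rand_string_Suc:
  assumes "0 < a"
  shows "rand_string (Suc n) a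
           = bind_pmf (rand_string n a) (\<lambda>s. map_pmf (\<lambda>c. s @ [c]) (pmf_of_set {..<a}))"
proof -
  have inj: "inj_on (\<lambda>(s, c). s @ [c]) (strings n a \<times> {..<a})"
    by (auto simp: inj_on_def)
  have "rand_string (Suc n) a = map_pmf (\<lambda>(s, c). s @ [c]) (pmf_of_set (strings n a \<times> {..<a}))"
    unfolding rand_string_def strings_Suc
    using assms finite_strings strings_nonempty by (subst map_pmf_of_set_inj[OF inj]) auto
  also have "\<dots> = map_pmf (\<lambda>(s, c). s @ [c]) (pair_pmf (rand_string n a) (pmf_of_set {..<a}))"
    unfolding rand_string_def using assms finite_strings strings_nonempty
    by (subst pmf_of_set_Times) auto
  finally show ?thesis
    by (simp add: pair_pmf_def map_bind_pmf map_pmf_def bind_assoc_pmf bind_return_pmf)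
qed

lemma map_pmf_neq_pmf_of_set:
  assumes "finite A" "x \<in> A"
  shows "map_pmf (\<lambda>c. c \<noteq> x) (pmf_of_set A)
           = bernoulli_pmf ((real (card A) - 1) / real (card A))"
proof (rule pmf_eqI)
  fix b :: bool
  have A: "A \<noteq> {}" "card A > 0"
    using assms card_gt_0_iff by blast+
  have "pmf (map_pmf (\<lambda>c. c \<noteq> x) (pmf_of_set A)) b
          = real (card (A \<inter> {c. (c \<noteq> x) = b})) / real (card A)"
    using assms A by (simp add: pmf_map measure_pmf_of_set vimage_def)
  also have "\<dots> = (if b then real (card A) - 1 else 1) / real (card A)"
  proof (cases b)
    case True
    then have "A \<inter> {c. (c \<noteq> x) = b} = A - {x}"
      by auto
    then show ?thesis
      using True assms A by (simp add: of_nat_diff Suc_leI)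
  next
    case False
    then have "A \<inter> {c. (c \<noteq> x) = b} = {x}"
      using assms by auto
    then show ?thesis
      using False by simp
  qed
  also have "\<dots> = pmf (bernoulli_pmf ((real (card A) - 1) / real (card A))) b"
    using A by (simp add: field_simps)
  finally show "pmf (map_pmf (\<lambda>c. c \<noteq> x) (pmf_of_set A)) b
                  = pmf (bernoulli_pmf ((real (card A) - 1) / real (card A))) b" .
qed

lemma map_pmf_runs_snoc:
  assumes "s \<noteq> []" "last s < a"
  shows "map_pmf (\<lambda>c. runs (s @ [c]) - 1) (pmf_of_set {..<a})
           = map_pmf (\<lambda>b. (if b then 1 else 0) + (runs s - 1)) (bernoulli_pmf ((real a - 1) / real a))"
proof -
  have "bernoulli_pmf ((real a - 1) / real a) = map_pmf (\<lambda>c. c \<noteq> last s) (pmf_of_set {..<a})"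
    using map_pmf_neq_pmf_of_set[of "{..<a}" "last s"] assms by simp
  then show ?thesis
    using runs_snoc[OF assms(1)] runs_pos[OF assms(1)]
    by (simp add: map_pmf_comp) (intro map_pmf_cong; simp)
qed

lemma runs_rand_string_Suc:
  assumes "0 < a"
  shows "map_pmf (\<lambda>s. runs s - 1) (rand_string (Suc n) a) = binomial_pmf n ((real a - 1) / real a)"
proof (induction n)
  case 0
  have "map_pmf (\<lambda>s. runs s - 1) (rand_string 1 a) = map_pmf (\<lambda>_. 0) (rand_string 1 a)"
    using assms
    by (intro map_pmf_cong) (auto simp: set_pmf_rand_string strings_def runs_def length_Suc_conv)
  then show ?case
    using assms by (simp add: binomial_pmf_0)
next
  case (Suc n)
  let ?p = "(real a - 1) / real a"
  have p: "?p \<in> {0..1}"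
    using assms by auto
  have "map_pmf (\<lambda>s. runs s - 1) (rand_string (Suc (Suc n)) a)
          = bind_pmf (rand_string (Suc n) a) (\<lambda>s. map_pmf (\<lambda>c. runs (s @ [c]) - 1) (pmf_of_set {..<a}))"
    by (simp add: rand_string_Suc[OF assms] map_bind_pmf map_pmf_comp)
  also have "\<dots> = bind_pmf (rand_string (Suc n) a)
                    (\<lambda>s. map_pmf (\<lambda>b. (if b then 1 else 0) + (runs s - 1)) (bernoulli_pmf ?p))"
  proof (intro bind_pmf_cong refl map_pmf_runs_snoc)
    fix s
    assume "s \<in> set_pmf (rand_string (Suc n) a)"
    then have "s \<noteq> []" "set s \<subseteq> {..<a}"
      using assms by (auto simp: set_pmf_rand_string strings_def)
    then show "s \<noteq> []" "last s < a"
      by (auto dest!: last_in_set)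
  qed
  also have "\<dots> = bind_pmf (binomial_pmf n ?p)
                    (\<lambda>k. map_pmf (\<lambda>b. (if b then 1 else 0) + k) (bernoulli_pmf ?p))"
    by (simp flip: Suc add: bind_map_pmf)
  also have "\<dots> = binomial_pmf (Suc n) ?p"
    unfolding binomial_pmf_Suc[OF p] map_pmf_def by (subst bind_commute_pmf) simp
  finally show ?case .
qed

lemma expectation_binomial_pmf_real:
  assumes "p \<in> {0..1}"
  shows "measure_pmf.expectation (binomial_pmf m p) real = real m * p"
proof (cases m)
  case (Suc m')
  have "measure_pmf.expectation (binomial_pmf m p) real
          = (\<Sum>k\<le>m'. real (Suc m' choose Suc k) * p ^ Suc k * (1 - p) ^ (m' - k) * real (Suc k))"
    using assms unfolding Suc expectation_binomial_pmf'[OF assms] by (subst sum.atMost_Suc_shift) simp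
  also have "\<dots> = (\<Sum>k\<le>m'. real (Suc m') * p * (real (m' choose k) * p ^ k * (1 - p) ^ (m' - k)))"
  proof (rule sum.cong[OF refl])
    fix k
    have "real (Suc k) * real (Suc m' choose Suc k) * (p * (p ^ k * (1 - p) ^ (m' - k)))
            = real (Suc m') * real (m' choose k) * (p * (p ^ k * (1 - p) ^ (m' - k)))"
      using binomial_absorption[of k "Suc m'"] by (metis diff_Suc_1 of_nat_mult)
    then show "real (Suc m' choose Suc k) * p ^ Suc k * (1 - p) ^ (m' - k) * real (Suc k)
                 = real (Suc m') * p * (real (m' choose k) * p ^ k * (1 - p) ^ (m' - k))"
      by (simp only: power_Suc mult_ac)
  qed
  also have "\<dots> = real (Suc m') * p"
    using binomial_ring[of p "1 - p" m'] by (simp add: sum_distrib_left[symmetric])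
  finally show ?thesis
    using Suc by simp
qed (use assms in \<open>simp add: binomial_pmf_0\<close>)

lemma expectation_binomial_pmf_sign:
  assumes "p \<in> {0..1}"
  shows "measure_pmf.expectation (binomial_pmf m p) (\<lambda>k. (-1) ^ k) = (1 - 2 * p) ^ m"
proof -
  have "(1 - 2 * p) ^ m = ((-p) + (1 - p)) ^ m"
    by simp
  also have "\<dots> = (\<Sum>k\<le>m. real (m choose k) * (-p) ^ k * (1 - p) ^ (m - k))"
    by (rule binomial_ring)
  also have "\<dots> = measure_pmf.expectation (binomial_pmf m p) (\<lambda>k. (-1) ^ k)"
    unfolding expectation_binomial_pmf'[OF assms]
    by (intro sum.cong refl) (simp add: power_minus[of p] mult_ac)
  finally show ?thesis ..
qed

lemma real_of_nat_div_2: "real (k div 2) = real k / 2 - (1 - (-1) ^ k) / 4"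
  by (cases "even k") (auto elim!: evenE oddE simp: field_simps)

lemma exp_tokens_Suc:
  assumes "0 < a"
  defines "p \<equiv> (real a - 1) / real a"
  shows "exp_tokens (Suc m) a = 1 + (1 + real m * p) / 2 + (1 + (1 - 2 * p) ^ m) / 4"
proof -
  have p: "p \<in> {0..1}"
    using assms by (auto simp: p_def)
  have "exp_tokens (Suc m) a
          = measure_pmf.expectation (rand_string (Suc m) a) (\<lambda>s. 2 + real ((runs s - 1) div 2))"
    unfolding exp_tokens_def
  proof (intro integral_cong_AE AE_pmfI)
    fix s
    assume "s \<in> set_pmf (rand_string (Suc m) a)"
    then have "s \<noteq> []"
      using assms by (auto simp: set_pmf_rand_string strings_def)
    then have "length (flashback s) = 2 + (runs s - 1) div 2"
      using length_flashback[of s] runs_pos[of s] by simp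
    then show "real (length (flashback s)) = 2 + real ((runs s - 1) div 2)"
      by simp
  qed simp_all
  also have "\<dots> = measure_pmf.expectation (map_pmf (\<lambda>s. runs s - 1) (rand_string (Suc m) a))
                    (\<lambda>k. 2 + real (k div 2))"
    by simp
  also have "\<dots> = measure_pmf.expectation (binomial_pmf m p) (\<lambda>k. 2 + real (k div 2))"
    unfolding runs_rand_string_Suc[OF assms(1)] p_def ..
  also have "\<dots> = 1 + (1 + real m * p) / 2 + (1 + (1 - 2 * p) ^ m) / 4"
    using p by (simp add: real_of_nat_div_2 expectation_binomial_pmf_real
        expectation_binomial_pmf_sign field_simps)
  finally show ?thesis .
qed

theorem theorem5p2:
  shows "(\<forall>n alpha. n \<ge> 2 \<and> alpha \<ge> 2 \<longrightarrow>
            (let p = (real alpha - 1) / real alpha in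
              map_pmf (\<lambda>s. runs s - 1) (rand_string n alpha) = binomial_pmf (n - 1) p
              \<and> exp_tokens n alpha =
                  1 + (1 + real (n - 1) * p) / 2
                    + (1 + ((2 - real alpha) / real alpha) ^ (n - 1)) / 4))
       \<and> (\<exists>C. \<forall>n alpha. n \<ge> 2 \<and> alpha \<ge> 2 \<longrightarrow>
            \<bar>exp_tokens n alpha - real n * (real alpha - 1) / (2 * real alpha)\<bar> \<le> C)"
proof (intro conjI exI[of _ 2] allI impI)
  fix n alpha :: nat
  assume "n \<ge> 2 \<and> alpha \<ge> 2"
  then obtain m where n: "n = Suc m" and alpha: "0 < alpha"
    by (cases n) auto
  define p where "p = (real alpha - 1) / real alpha"
  have p: "0 \<le> p" "p \<le> 1"
    using alpha by (auto simp: p_def)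
  have "(2 - real alpha) / real alpha = 1 - 2 * p"
    using alpha by (simp add: p_def field_simps)
  moreover have "map_pmf (\<lambda>s. runs s - 1) (rand_string n alpha) = binomial_pmf (n - 1) p"
    using runs_rand_string_Suc[OF alpha] by (simp add: n p_def)
  moreover have tokens:
    "exp_tokens n alpha = 1 + (1 + real m * p) / 2 + (1 + (1 - 2 * p) ^ m) / 4"
    using exp_tokens_Suc[OF alpha] by (simp add: n p_def)
  ultimately show "let p = (real alpha - 1) / real alpha in
          map_pmf (\<lambda>s. runs s - 1) (rand_string n alpha) = binomial_pmf (n - 1) p
          \<and> exp_tokens n alpha = 1 + (1 + real (n - 1) * p) / 2
                                  + (1 + ((2 - real alpha) / real alpha) ^ (n - 1)) / 4"
    unfolding Let_def p_def[symmetric] by (simp add: n)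
  have linear: "real n * (real alpha - 1) / (2 * real alpha) = real n * p / 2"
    by (simp add: p_def)
  have "exp_tokens n alpha - real n * (real alpha - 1) / (2 * real alpha)
          = 7 / 4 - p / 2 + (1 - 2 * p) ^ m / 4"
    unfolding tokens linear by (simp add: n field_simps)
  moreover have "\<bar>(1 - 2 * p) ^ m\<bar> \<le> 1"
    using p by (simp add: power_abs power_le_one)
  ultimately show "\<bar>exp_tokens n alpha - real n * (real alpha - 1) / (2 * real alpha)\<bar> \<le> 2"
    using p by (simp add: abs_le_iff)
qed

end
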